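(* Assume $\rho\in(\frac14,\frac12)$. Then, as $h\to0_+$, \[ \lambda_1(\mathcal H_h)=-1-h^{1/2}-\frac12h+o(h). \]
   Context: For $h\in(0,1)$ with $h^{\frac12-\rho}<\frac13$, let $\delta=h^{\rho-\frac12}$. $\mathcal H_h$ is the self-adjoint operator in the weighted space $L^2((0,\delta);(1-h^{1/2}\tau)d\tau)$ associated with the closed quadratic form \[ q_h(u)=\int_0^\delta|u'(\tau)|^2(1-h^{1/2}\tau)\,d\tau-|u(0)|^2 \] on $\{u\in H^1((0,\delta)):u(\delta)=0\}$; it acts as $-\frac{d^2}{d\tau^2}+\frac{h^{1/2}}{1-h^{1/2}\tau}\frac{d}{d\tau}$ with domain $\{u\in H^2((0,\delta)):u'(0)=-u(0),\ u(\delta)=0\}$. $\lambda_1(\mathcal H_h)$ is its lowest eigenvalue. *)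

theory Defs
  imports "HOL-Analysis.Analysis" "HOL-Library.Landau_Symbols"
begin

text \<open>delta = h^(rho - 1/2), the length of the interval.\<close>
definition delta_h :: "real \<Rightarrow> real \<Rightarrow> real" where
  "delta_h h \<rho> = h powr (\<rho> - 1/2)"

text \<open>lam is an eigenvalue of H_h: there is a nonzero u, twice differentiable on
  [0, delta] (an H^2 function; eigenfunctions are smooth up to the boundary since the
  coefficients are smooth there), with
  -u'' + h^(1/2)/(1 - h^(1/2) t) u' = lam u on [0,delta], u'(0) = -u(0), u(delta) = 0.\<close>
definition is_eigenvalue_H :: "real \<Rightarrow> real \<Rightarrow> real \<Rightarrow> bool" where
  "is_eigenvalue_H h \<rho> lam \<longleftrightarrow>
     (let \<delta> = delta_h h \<rho> in
      \<exists>u u' u'' :: real \<Rightarrow> real.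
        (\<forall>t\<in>{0..\<delta>}. (u has_real_derivative u' t) (at t within {0..\<delta>}) \<and>
                         (u' has_real_derivative u'' t) (at t within {0..\<delta>})) \<and>
        (\<forall>t\<in>{0..\<delta>}. - u'' t + sqrt h / (1 - sqrt h * t) * u' t = lam * u t) \<and>
        u' 0 = - u 0 \<and> u \<delta> = 0 \<and>
        (\<exists>t\<in>{0..\<delta>}. u t \<noteq> 0))"

definition lambda1_H :: "real \<Rightarrow> real \<Rightarrow> real" where
  "lambda1_H h \<rho> = Inf {lam. is_eigenvalue_H h \<rho> lam}"

end

theory Submission
  imports Defs "HOL-Real_Asymp.Real_Asymp"
begin

text \<open>Write \<open>c = sqrt h\<close>, \<open>\<delta> = h powr (\<rho> - 1/2)\<close> and \<open>w t = 1 - c t\<close>. Integrating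
  \<open>(w g f\<^sup>2)'\<close> gives, for \<open>f \<delta> = 0\<close> and any \<open>g\<close>, the Riccati identity
  \<open>\<integral> w f'\<^sup>2 - f(0)\<^sup>2 = \<integral> w (f' - g f)\<^sup>2 - (g(0) + 1) f(0)\<^sup>2 + \<integral> (c g - w g' - w g\<^sup>2) f\<^sup>2\<close>.
  For \<open>g t = -1 + c\<^sup>2 t / 2\<close> the last weight is \<open>(-1 - c - c\<^sup>2/2) w + O(c\<^sup>3 \<delta>\<^sup>2)\<close>, which bounds
  every eigenvalue from below by \<open>-1 - c - c\<^sup>2/2 - O(c\<^sup>3 \<delta>\<^sup>2)\<close>.

  For the upper bound, the solution \<open>u\<close> of the eigenvalue equation with \<open>u 0 = 1\<close>, \<open>u' 0 = -1\<close>
  is a power series in \<open>t\<close> depending continuously on the spectral parameter. If it had no zero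
  in \<open>[0, \<delta>]\<close>, the identity with \<open>g = u'/u\<close> would bound the parameter by the Rayleigh quotient
  of \<open>exp (-t + c\<^sup>2 t\<^sup>2/4)\<close> minus its value at \<open>\<delta>\<close>, which is
  \<open>-1 - c - c\<^sup>2/2 + O(c\<^sup>3 \<delta>\<^sup>2 + \<delta> e\<^sup>-\<^sup>2\<^sup>\<delta>)\<close>. So \<open>u\<close> vanishes for a slightly larger parameter, and
  the smallest parameter at which it vanishes is an eigenvalue: there \<open>u \<ge> 0\<close>, so a zero
  before \<open>\<delta>\<close> would be a double zero, which the Wronskian excludes. As \<open>\<rho> > 1/4\<close>,
  \<open>c\<^sup>3 \<delta>\<^sup>2 = h powr (2\<rho> + 1/2) = o(h)\<close>.\<close>

section \<open>Power series solutions of the eigenvalue equation\<close>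

text \<open>Coefficients of the power series solution of \<open>(1 - c t) u'' - c u' + l (1 - c t) u = 0\<close>
  with \<open>u 0 = a\<close>, \<open>u' 0 = b\<close>: the recursion is the coefficient of \<open>t\<^sup>n\<^sup>+\<^sup>1\<close> of the equation.\<close>
fun sol_coeff :: "real \<Rightarrow> real \<Rightarrow> real \<Rightarrow> real \<Rightarrow> nat \<Rightarrow> real" where
  "sol_coeff c l a b 0 = a"
| "sol_coeff c l a b (Suc 0) = b"
| "sol_coeff c l a b (Suc (Suc 0)) = (c*b - l*a)/2"
| "sol_coeff c l a b (Suc (Suc (Suc n))) =
     (c*(real n+2)^2 * sol_coeff c l a b (Suc (Suc n)) - l * sol_coeff c l a b (Suc n)
      + l*c * sol_coeff c l a b n) / ((real n+3)*(real n+2))"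

lemma sol_coeff_step_bound:
  fixes n :: nat
  assumes c0: "0 \<le> c" and cq: "c \<le> q" and q0: "0 < q" and lL: "\<bar>l\<bar> \<le> L" and K0: "0 \<le> K"
    and E0: "0 \<le> E"
    and x0: "\<bar>x0\<bar> \<le> K * q^n * E" and x1: "\<bar>x1\<bar> \<le> K * q^(n+1) * E"
    and x2: "\<bar>x2\<bar> \<le> K * q^(n+2) * E"
  shows "\<bar>(c*(real n+2)^2 * x2 - l * x1 + l*c*x0) / ((real n+3)*(real n+2))\<bar>
      \<le> K * q^(n+3) * E * (1 + 2*(L/q^2)/((real n+3)*(real n+2)))"
proof -
  have L0: "0 \<le> L" using lL by linarith
  have d0: "0 < (real n+3)*(real n+2)" by simp
  have "\<bar>c*(real n+2)^2 * x2 - l * x1 + l*c*x0\<bar> \<le> \<bar>c*(real n+2)^2 * x2\<bar> + \<bar>l * x1\<bar> + \<bar>l*c*x0\<bar>"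
    by linarith
  also have "\<dots> = c*(real n+2)^2 * \<bar>x2\<bar> + \<bar>l\<bar> * \<bar>x1\<bar> + \<bar>l\<bar>*c*\<bar>x0\<bar>"
    using c0 by (simp add: abs_mult)
  also have "\<dots> \<le> q*(real n+2)^2 * (K * q^(n+2) * E) + L * (K * q^(n+1) * E) + L*q*(K * q^n * E)"
    using c0 cq L0 lL x0 x1 x2 by (intro add_mono mult_mono) auto
  also have "\<dots> = K * q^(n+3) * E * ((real n+2)^2 + 2*(L/q^2))"
    using q0 by (simp add: field_simps power_add numeral_3_eq_3 numeral_2_eq_2)
  also have "\<dots> \<le> K * q^(n+3) * E * ((real n+3)*(real n+2) + 2*(L/q^2))"
    using K0 E0 q0 by (intro mult_left_mono) (auto simp: power2_eq_square)
  also have "\<dots> = K * q^(n+3) * E * (1 + 2*(L/q^2)/((real n+3)*(real n+2))) * ((real n+3)*(real n+2))"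
    using d0 by (simp add: distrib_right)
  finally show ?thesis
    using d0 by (simp add: abs_divide pos_divide_le_eq)
qed

lemma exp_telescoping_step:
  fixes x :: real and n :: nat
  assumes "0 \<le> x"
  shows "exp (4*x - 4*x/(real n+3)) * (1 + 2*x/((real n+3)*(real n+2))) \<le> exp (4*x - 4*x/(real n+4))"
proof -
  have "2*((real n+3)*(real n+4)) \<le> 4*((real n+3)*(real n+2))" by (simp add: algebra_simps)
  then have div: "2/((real n+3)*(real n+2)) \<le> 4/((real n+3)*(real n+4))" by (simp add: divide_simps)
  have "2*x/((real n+3)*(real n+2)) = x * (2/((real n+3)*(real n+2)))" by simp
  also have "\<dots> \<le> x * (4/((real n+3)*(real n+4)))" using div assms by (rule mult_left_mono)
  also have "\<dots> = 4*x/(real n+3) - 4*x/(real n+4)" by (simp add: field_simps)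
  finally have "2*x/((real n+3)*(real n+2)) \<le> 4*x/(real n+3) - 4*x/(real n+4)" .
  then have "1 + 2*x/((real n+3)*(real n+2)) \<le> exp (4*x/(real n+3) - 4*x/(real n+4))"
    using exp_ge_add_one_self[of "4*x/(real n+3) - 4*x/(real n+4)"] by linarith
  then have "exp (4*x - 4*x/(real n+3)) * (1 + 2*x/((real n+3)*(real n+2)))
      \<le> exp (4*x - 4*x/(real n+3)) * exp (4*x/(real n+3) - 4*x/(real n+4))"
    by (rule mult_left_mono) simp
  also have "\<dots> = exp (4*x - 4*x/(real n+4))" by (simp flip: exp_add)
  finally show ?thesis .
qed

lemma sol_coeff_2_bound:
  assumes c0: "0 \<le> c" and cq: "c \<le> q" and q0: "0 < q" and lL: "\<bar>l\<bar> \<le> L"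
    and a: "\<bar>a\<bar> \<le> K" and b: "\<bar>b\<bar> \<le> K * q"
  shows "\<bar>sol_coeff c l a b 2\<bar> \<le> K * q^2 * exp (4*(L/q^2) - 4*(L/q^2)/3)"
proof -
  have L0: "0 \<le> L" using lL by linarith
  have K0: "0 \<le> K" using a by linarith
  have "\<bar>c*b - l*a\<bar> \<le> q*(K*q) + L*K"
    using c0 cq b lL a L0 abs_triangle_ineq4[of "c*b" "l*a"] by (simp add: abs_mult) (smt (verit) mult_mono)
  also have "\<dots> = K*q^2*(1 + L/q^2)" using q0 by (simp add: field_simps power2_eq_square)
  also have "\<dots> \<le> K*q^2*exp (4*(L/q^2) - 4*(L/q^2)/3)"
  proof (intro mult_left_mono)
    have "1 + L/q^2 \<le> exp (L/q^2)" by (rule exp_ge_add_one_self)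
    also have "\<dots> \<le> exp (4*(L/q^2) - 4*(L/q^2)/3)" using L0 q0 by (simp add: field_simps)
    finally show "1 + L/q^2 \<le> exp (4*(L/q^2) - 4*(L/q^2)/3)" .
  qed (use K0 in auto)
  finally show ?thesis by (simp add: numeral_2_eq_2 abs_divide)
qed

lemma sol_coeff_bound:
  assumes c0: "0 \<le> c" and cq: "c \<le> q" and q0: "0 < q" and lL: "\<bar>l\<bar> \<le> L"
    and a: "\<bar>a\<bar> \<le> K" and b: "\<bar>b\<bar> \<le> K * q"
  shows "\<bar>sol_coeff c l a b n\<bar> \<le> K * q^n * exp (4*(L/q^2) - 4*(L/q^2)/(real n+1))"
proof -
  define x where "x = L/q^2"
  define B where "B n = K * q^n * exp (4*x - 4*x/(real n+1))" for n
  have L0: "0 \<le> L" using lL by linarith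
  have K0: "0 \<le> K" using a by linarith
  have x0: "0 \<le> x" unfolding x_def using L0 by simp
  have B_le: "B m \<le> K * q^m * exp (4*x - 4*x/(real k+1))" if "m \<le> k" for m k :: nat
    unfolding B_def using that x0 K0 q0 by (intro mult_left_mono) (auto simp: divide_left_mono)
  have "\<bar>sol_coeff c l a b n\<bar> \<le> B n \<and> \<bar>sol_coeff c l a b (n+1)\<bar> \<le> B (n+1)
      \<and> \<bar>sol_coeff c l a b (n+2)\<bar> \<le> B (n+2)"
  proof (induction n)
    case 0
    have "\<bar>sol_coeff c l a b 2\<bar> \<le> B 2"
      using sol_coeff_2_bound[OF c0 cq q0 lL a b] unfolding B_def x_def by simp
    moreover have "\<bar>sol_coeff c l a b 1\<bar> \<le> B 1"
      unfolding B_def using b K0 q0 x0 mult_left_mono[of 1 "exp (4*x - 4*x/2)" "K*q"] by simp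
    moreover have "\<bar>sol_coeff c l a b 0\<bar> \<le> B 0"
      unfolding B_def using a by simp
    ultimately show ?case by (simp add: numeral_2_eq_2 del: sol_coeff.simps)
  next
    case (Suc n)
    define E where "E = exp (4*x - 4*x/(real n+3))"
    have x: "\<bar>sol_coeff c l a b (n+i)\<bar> \<le> K * q^(n+i) * E" if "i \<le> 2" for i
      using Suc.IH B_le[of "n+i" "n+2"] that unfolding E_def
      by (auto simp: le_Suc_eq numeral_2_eq_2 add.commute add.left_commute)
    have "\<bar>sol_coeff c l a b (n+3)\<bar> \<le> K * q^(n+3) * (E * (1 + 2*x/((real n+3)*(real n+2))))"
      using sol_coeff_step_bound[OF c0 cq q0 lL K0 _ x[of 0, simplified] x[of 1] x[of 2]]
      by (simp add: E_def x_def numeral_3_eq_3 mult.assoc)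
    also have "\<dots> \<le> B (n+3)"
      unfolding B_def E_def using exp_telescoping_step[OF x0, of n] K0 q0
      by (intro mult_left_mono) (auto simp: add.commute)
    finally show ?case using Suc.IH by (simp add: eval_nat_numeral del: sol_coeff.simps)
  qed
  then show ?thesis unfolding B_def x_def by simp
qed

lemma sol_coeff_geometric_bound:
  assumes "0 \<le> c" "c \<le> q" "0 < q" "\<bar>l\<bar> \<le> L"
  shows "\<bar>sol_coeff c l a b n\<bar> \<le> max \<bar>a\<bar> (\<bar>b\<bar>/q) * exp (4*(L/q^2)) * q^n"
proof -
  define K where "K = max \<bar>a\<bar> (\<bar>b\<bar>/q)"
  have "\<bar>b\<bar>/q \<le> K" unfolding K_def by simp
  then have b: "\<bar>b\<bar> \<le> K * q" using \<open>0 < q\<close> by (simp add: divide_le_eq)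
  have "\<bar>sol_coeff c l a b n\<bar> \<le> K * q^n * exp (4*(L/q^2) - 4*(L/q^2)/(real n+1))"
    using sol_coeff_bound[OF assms _ b] unfolding K_def by simp
  also have "\<dots> \<le> K * q^n * exp (4*(L/q^2))"
    using assms by (intro mult_left_mono) (auto simp: K_def)
  finally show ?thesis unfolding K_def by (simp add: mult_ac)
qed

lemma radius_above:
  fixes c r :: real
  assumes "0 \<le> c" "0 \<le> r" "c * r < 1"
  obtains q where "c \<le> q" "0 < q" "q * r < 1"
proof
  define q where "q = c + (1 - c*r) / (2*(r+1))"
  have "0 < (1 - c*r) / (2*(r+1))" using assms by simp
  then show "c \<le> q" "0 < q" unfolding q_def using assms by linarith+
  have "r / (2*(r+1)) < 1" using assms by simp
  then have "(1 - c*r) * (r / (2*(r+1))) < (1 - c*r) * 1"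
    by (rule mult_strict_left_mono) (use assms in simp)
  then have "(1 - c*r) / (2*(r+1)) * r < 1 - c*r" by (simp add: field_simps)
  then show "q * r < 1" unfolding q_def by (simp add: algebra_simps)
qed

definition sol :: "real \<Rightarrow> real \<Rightarrow> real \<Rightarrow> real \<Rightarrow> real \<Rightarrow> real" where
  "sol c l a b t = (\<Sum>n. sol_coeff c l a b n * t^n)"

definition sol_deriv :: "real \<Rightarrow> real \<Rightarrow> real \<Rightarrow> real \<Rightarrow> real \<Rightarrow> real" where
  "sol_deriv c l a b t = (\<Sum>n. diffs (sol_coeff c l a b) n * t^n)"

definition sol_deriv2 :: "real \<Rightarrow> real \<Rightarrow> real \<Rightarrow> real \<Rightarrow> real \<Rightarrow> real" where
  "sol_deriv2 c l a b t = (\<Sum>n. diffs (diffs (sol_coeff c l a b)) n * t^n)"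

lemma sol_at_0: "sol c l a b 0 = a" "sol_deriv c l a b 0 = b"
  unfolding sol_def sol_deriv_def
  using powser_zero[of "sol_coeff c l a b"] powser_zero[of "diffs (sol_coeff c l a b)"]
  by (simp_all add: diffs_def)

lemma summable_sol:
  assumes "0 \<le> c" "c \<le> q" "0 < q" "\<bar>t\<bar> < 1/q"
  shows "summable (\<lambda>n. sol_coeff c l a b n * t^n)"
proof (rule summable_comparison_test)
  define M where "M = max \<bar>a\<bar> (\<bar>b\<bar>/q) * exp (4*(\<bar>l\<bar>/q^2))"
  have "norm (sol_coeff c l a b n * t^n) \<le> M * (q*\<bar>t\<bar>)^n" for n
  proof -
    have "\<bar>sol_coeff c l a b n\<bar> * \<bar>t\<bar>^n \<le> M * q^n * \<bar>t\<bar>^n"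
      using sol_coeff_geometric_bound[OF assms(1-3) order_refl] unfolding M_def
      by (intro mult_right_mono) auto
    then show ?thesis by (simp add: abs_mult power_abs power_mult_distrib mult_ac)
  qed
  then show "\<exists>N. \<forall>n\<ge>N. norm (sol_coeff c l a b n * t^n) \<le> M * (q*\<bar>t\<bar>)^n" by blast
  show "summable (\<lambda>n. M * (q*\<bar>t\<bar>)^n)"
    using assms by (intro summable_mult summable_geometric) (auto simp: field_simps)
qed

lemma sol_derivs_and_sums:
  assumes "0 \<le> c" "c * \<bar>t\<bar> < 1"
  shows "(sol c l a b has_real_derivative sol_deriv c l a b t) (at t)"
    and "(sol_deriv c l a b has_real_derivative sol_deriv2 c l a b t) (at t)"
    and "(\<lambda>n. sol_coeff c l a b n * t^n) sums sol c l a b t"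
    and "(\<lambda>n. diffs (sol_coeff c l a b) n * t^n) sums sol_deriv c l a b t"
    and "(\<lambda>n. diffs (diffs (sol_coeff c l a b)) n * t^n) sums sol_deriv2 c l a b t"
    and "isCont (sol_deriv2 c l a b) t"
proof -
  obtain q where q: "c \<le> q" "0 < q" "q * \<bar>t\<bar> < 1"
    using radius_above[OF assms(1) abs_ge_zero assms(2)] .
  have t: "norm t < 1/q" using q by (simp add: field_simps)
  have s0: "summable (\<lambda>n. sol_coeff c l a b n * z^n)" if "norm z < 1/q" for z
    using summable_sol[OF assms(1) q(1,2)] that by simp
  have s1: "summable (\<lambda>n. diffs (sol_coeff c l a b) n * z^n)" if "norm z < 1/q" for z
    using termdiff_converges s0 that by blast
  have s2: "summable (\<lambda>n. diffs (diffs (sol_coeff c l a b)) n * z^n)" if "norm z < 1/q" for z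
    using termdiff_converges s1 that by blast
  show "(sol c l a b has_real_derivative sol_deriv c l a b t) (at t)"
    unfolding sol_def[abs_def] sol_deriv_def using termdiffs_strong'[OF s0 t] by simp
  show "(sol_deriv c l a b has_real_derivative sol_deriv2 c l a b t) (at t)"
    unfolding sol_deriv_def[abs_def] sol_deriv2_def using termdiffs_strong'[OF s1 t] by simp
  show "isCont (sol_deriv2 c l a b) t"
    unfolding sol_deriv2_def[abs_def]
    using termdiffs_strong'[OF s2 t] by (rule DERIV_isCont)
  show "(\<lambda>n. sol_coeff c l a b n * t^n) sums sol c l a b t"
    unfolding sol_def using s0[OF t] by (simp add: summable_sums)
  show "(\<lambda>n. diffs (sol_coeff c l a b) n * t^n) sums sol_deriv c l a b t"
    unfolding sol_deriv_def using s1[OF t] by (simp add: summable_sums)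
  show "(\<lambda>n. diffs (diffs (sol_coeff c l a b)) n * t^n) sums sol_deriv2 c l a b t"
    unfolding sol_deriv2_def using s2[OF t] by (simp add: summable_sums)
qed

lemma sol_ode:
  assumes "0 \<le> c" "c * \<bar>t\<bar> < 1"
  shows "(1 - c*t) * sol_deriv2 c l a b t - c * sol_deriv c l a b t + l * (1 - c*t) * sol c l a b t = 0"
proof -
  define A where "A = sol_coeff c l a b"
  define u where "u = sol c l a b t"
  define u' where "u' = sol_deriv c l a b t"
  define u'' where "u'' = sol_deriv2 c l a b t"
  note S = sol_derivs_and_sums(3-5)[OF assms, of l a b, folded A_def u_def u'_def u''_def]
  define Lc where "Lc n = diffs (diffs A) n - c * diffs A n + l * A n" for n
  define Rc where "Rc n = c * diffs (diffs A) n + l*c*A n" for n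
  have "(\<lambda>n. Lc n * t^n) sums (u'' - c * u' + l * u)"
    unfolding Lc_def using sums_add[OF sums_diff[OF S(3) sums_mult[OF S(2)]] sums_mult[OF S(1)]]
    by (simp add: algebra_simps)
  moreover have "Lc 0 = 0"
    unfolding Lc_def A_def by (simp add: diffs_def numeral_2_eq_2 field_simps)
  ultimately have sL: "(\<lambda>n. Lc (Suc n) * t^(Suc n)) sums (u'' - c * u' + l * u)"
    by (subst sums_Suc_iff) simp
  have LR: "Lc (Suc n) = Rc n" for n
  proof -
    have "A (Suc (Suc (Suc n))) * ((real n+3)*(real n+2))
        = c*(real n+2)^2 * A (Suc (Suc n)) - l * A (Suc n) + l*c*A n"
      unfolding A_def sol_coeff.simps by simp
    then show ?thesis unfolding Lc_def Rc_def diffs_def by (simp add: algebra_simps power2_eq_square)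
  qed
  have sR: "(\<lambda>n. Rc n * t^n) sums (c * u'' + l*c*u)"
    unfolding Rc_def using sums_add[OF sums_mult[OF S(3), of c] sums_mult[OF S(1), of "l*c"]]
    by (simp add: algebra_simps)
  have "(\<lambda>n. Lc (Suc n) * t^(Suc n)) sums (t * (c * u'' + l*c*u))"
    using sums_mult[OF sR, of t] by (simp add: LR mult_ac)
  with sL have "u'' - c * u' + l * u = t * (c * u'' + l*c*u)"
    by (rule sums_unique2)
  then show ?thesis unfolding u_def u'_def u''_def by (simp add: algebra_simps)
qed

lemma isCont_sol_coeff: "isCont (\<lambda>l. sol_coeff c l a b n) l"
  by (induction c l a b n rule: sol_coeff.induct) (auto intro!: continuous_intros)

lemma continuous_on_sol_joint:
  assumes "0 \<le> c" "0 \<le> r" "c * r < 1"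
  shows "continuous_on ({-L..L} \<times> {-r..r}) (\<lambda>p. sol c (fst p) a b (snd p))"
proof -
  obtain q where q: "c \<le> q" "0 < q" "q * r < 1" using radius_above[OF assms] .
  define M where "M = max \<bar>a\<bar> (\<bar>b\<bar>/q) * exp (4*(L/q^2))"
  have "uniform_limit ({-L..L} \<times> {-r..r}) (\<lambda>n p. \<Sum>i<n. sol_coeff c (fst p) a b i * (snd p)^i)
     (\<lambda>p. \<Sum>i. sol_coeff c (fst p) a b i * (snd p)^i) sequentially"
  proof (rule Weierstrass_m_test)
    fix n :: nat and p :: "real \<times> real" assume "p \<in> {-L..L} \<times> {-r..r}"
    then have lL: "\<bar>fst p\<bar> \<le> L" and tr: "\<bar>snd p\<bar> \<le> r" by auto
    have "\<bar>sol_coeff c (fst p) a b n\<bar> * \<bar>snd p\<bar>^n \<le> (M * q^n) * r^n"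
      using sol_coeff_geometric_bound[OF assms(1) q(1,2) lL] tr q(2) unfolding M_def
      by (intro mult_mono power_mono) auto
    then show "norm (sol_coeff c (fst p) a b n * (snd p)^n) \<le> M * (q*r)^n"
      by (simp add: abs_mult power_abs power_mult_distrib mult_ac)
  next
    show "summable (\<lambda>n. M * (q*r)^n)"
      using q assms by (intro summable_mult summable_geometric) auto
  qed
  moreover have "continuous_on ({-L..L} \<times> {-r..r}) (\<lambda>p. sol_coeff c (fst p) a b i)" for i
    using continuous_on_compose[OF continuous_on_fst[OF continuous_on_id],
        of _ "\<lambda>l. sol_coeff c l a b i"] isCont_sol_coeff
    by (simp add: o_def continuous_at_imp_continuous_on)
  then have "continuous_on ({-L..L} \<times> {-r..r}) (\<lambda>p. \<Sum>i<n. sol_coeff c (fst p) a b i * (snd p)^i)" for n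
    by (intro continuous_on_sum continuous_intros)
  ultimately show ?thesis unfolding sol_def
    by (intro uniform_limit_theorem[of _ "\<lambda>n p. \<Sum>i<n. sol_coeff c (fst p) a b i * (snd p)^i"]) auto
qed

lemma sol_on_interval:
  assumes c0: "0 \<le> c" and cT: "c * T < 1"
  shows "\<And>t. t \<in> {0..T} \<Longrightarrow> (sol c l a b has_real_derivative sol_deriv c l a b t) (at t within {0..T})"
    and "\<And>t. t \<in> {0..T} \<Longrightarrow> (sol_deriv c l a b has_real_derivative sol_deriv2 c l a b t) (at t within {0..T})"
    and "\<And>t. t \<in> {0..T} \<Longrightarrow> - sol_deriv2 c l a b t + c / (1 - c*t) * sol_deriv c l a b t = l * sol c l a b t"
    and "continuous_on {0..T} (sol c l a b)"
    and "continuous_on {0..T} (sol_deriv c l a b)"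
    and "continuous_on {0..T} (sol_deriv2 c l a b)"
proof -
  have ct: "c * \<bar>t\<bar> < 1" if "t \<in> {0..T}" for t
  proof -
    have "c * t \<le> c * T" using that c0 by (intro mult_left_mono) auto
    then show ?thesis using that cT by simp
  qed
  note D = sol_derivs_and_sums(1,2,6)[OF c0 ct]
  show d1: "\<And>t. t \<in> {0..T} \<Longrightarrow> (sol c l a b has_real_derivative sol_deriv c l a b t) (at t within {0..T})"
    using D(1) by (rule has_field_derivative_at_within)
  show d2: "\<And>t. t \<in> {0..T} \<Longrightarrow> (sol_deriv c l a b has_real_derivative sol_deriv2 c l a b t) (at t within {0..T})"
    using D(2) by (rule has_field_derivative_at_within)
  show "continuous_on {0..T} (sol c l a b)" by (rule DERIV_continuous_on[OF d1])
  show "continuous_on {0..T} (sol_deriv c l a b)" by (rule DERIV_continuous_on[OF d2])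
  show "continuous_on {0..T} (sol_deriv2 c l a b)"
    by (intro continuous_at_imp_continuous_on ballI D(3))
  fix t assume t: "t \<in> {0..T}"
  have w: "1 - c*t \<noteq> 0" using ct[OF t] t by simp
  have "c / (1 - c*t) * sol_deriv c l a b t
      = (sol_deriv2 c l a b t * (1 - c*t) + l * (1 - c*t) * sol c l a b t) / (1 - c*t)"
    using sol_ode[OF c0 ct[OF t], of l a b] by (simp add: algebra_simps)
  also have "\<dots> = sol_deriv2 c l a b t + l * sol c l a b t"
    using w by (simp add: add_divide_distrib)
  finally show "- sol_deriv2 c l a b t + c / (1 - c*t) * sol_deriv c l a b t = l * sol c l a b t"
    by simp
qed

section \<open>The Riccati identity\<close>

lemma riccati_identity:
  fixes c T :: real and f f' g g' :: "real \<Rightarrow> real"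
  assumes T: "0 < T"
    and df: "\<And>t. t \<in> {0..T} \<Longrightarrow> (f has_real_derivative f' t) (at t within {0..T})"
    and dg: "\<And>t. t \<in> {0..T} \<Longrightarrow> (g has_real_derivative g' t) (at t within {0..T})"
    and cf': "continuous_on {0..T} f'" and cg': "continuous_on {0..T} g'"
    and fT: "f T = 0"
  shows "integral {0..T} (\<lambda>t. (1 - c*t) * (f' t)^2) - (f 0)^2 =
     integral {0..T} (\<lambda>t. (1 - c*t) * (f' t - g t * f t)^2) - (g 0 + 1) * (f 0)^2
     + integral {0..T} (\<lambda>t. (c * g t - (1 - c*t) * g' t - (1 - c*t) * (g t)^2) * (f t)^2)"
proof -
  have cf: "continuous_on {0..T} f" by (rule DERIV_continuous_on[OF df])
  have cg: "continuous_on {0..T} g" by (rule DERIV_continuous_on[OF dg])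
  define P where "P t = (1 - c*t) * g t * (f t)^2" for t
  define P' where "P' t = - c * g t * (f t)^2 + (1 - c*t) * g' t * (f t)^2 + (1 - c*t) * g t * (2 * f t * f' t)" for t
  have "(P has_vector_derivative P' t) (at t within {0..T})" if "t \<in> {0..T}" for t
  proof -
    have "(P has_real_derivative P' t) (at t within {0..T})"
      unfolding P_def[abs_def] P'_def
      by (rule derivative_eq_intros df[OF that] dg[OF that] refl)+ (simp add: algebra_simps)
    then show ?thesis by (simp add: has_real_derivative_iff_has_vector_derivative)
  qed
  then have iP: "(P' has_integral - g 0 * (f 0)^2) {0..T}"
    using fundamental_theorem_of_calculus[of 0 T P P'] T fT by (simp add: P_def)
  define F1 where "F1 t = (1 - c*t) * (f' t - g t * f t)^2" for t
  define F3 where "F3 t = (c * g t - (1 - c*t) * g' t - (1 - c*t) * (g t)^2) * (f t)^2" for t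
  have "(F1 has_integral integral {0..T} F1) {0..T}" "(F3 has_integral integral {0..T} F3) {0..T}"
    unfolding F1_def F3_def
    by (intro integrable_integral integrable_continuous_interval continuous_intros cf cg cf' cg')+
  from has_integral_add[OF has_integral_add[OF this(1) iP] this(2)]
  have "((\<lambda>t. (1 - c*t) * (f' t)^2) has_integral (integral {0..T} F1 + - g 0 * (f 0)^2 + integral {0..T} F3)) {0..T}"
    by (rule has_integral_eq[rotated]) (simp add: F1_def F3_def P'_def power2_eq_square algebra_simps)
  then show ?thesis
    unfolding F1_def[symmetric] F3_def[symmetric] by (simp add: integral_unique algebra_simps)
qed

lemma eigenfunction_energy_identity:
  fixes c T lam :: real and u u' u'' :: "real \<Rightarrow> real"
  assumes T: "0 < T"
    and du: "\<And>t. t \<in> {0..T} \<Longrightarrow> (u has_real_derivative u' t) (at t within {0..T})"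
    and du': "\<And>t. t \<in> {0..T} \<Longrightarrow> (u' has_real_derivative u'' t) (at t within {0..T})"
    and ode: "\<And>t. t \<in> {0..T} \<Longrightarrow> - u'' t + c / (1 - c*t) * u' t = lam * u t"
    and w: "\<And>t. t \<in> {0..T} \<Longrightarrow> 0 < 1 - c*t"
    and bc0: "u' 0 = - u 0" and bcT: "u T = 0"
  shows "integral {0..T} (\<lambda>t. (1 - c*t) * (u' t)^2) - (u 0)^2
       = lam * integral {0..T} (\<lambda>t. (1 - c*t) * (u t)^2)"
proof -
  have cu: "continuous_on {0..T} u" by (rule DERIV_continuous_on[OF du])
  have cu': "continuous_on {0..T} u'" by (rule DERIV_continuous_on[OF du'])
  define Q where "Q t = (1 - c*t) * u' t * u t" for t
  define Q' where "Q' t = (1 - c*t) * (u' t)^2 - lam * ((1 - c*t) * (u t)^2)" for t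
  have "(Q has_vector_derivative Q' t) (at t within {0..T})" if t: "t \<in> {0..T}" for t
  proof -
    have "(Q has_real_derivative (- c * u' t * u t + (1 - c*t) * u'' t * u t + (1 - c*t) * u' t * u' t)) (at t within {0..T})"
      unfolding Q_def[abs_def]
      by (rule derivative_eq_intros du[OF t] du'[OF t] refl)+ (simp add: algebra_simps)
    moreover have "(1 - c*t) * u'' t = c * u' t - lam * (1 - c*t) * u t"
      using ode[OF t] w[OF t] by (simp add: field_simps)
    then have "(1 - c*t) * u'' t * u t = (c * u' t - lam * (1 - c*t) * u t) * u t" by simp
    then have "- c * u' t * u t + (1 - c*t) * u'' t * u t + (1 - c*t) * u' t * u' t = Q' t"
      unfolding Q'_def by (simp add: power2_eq_square algebra_simps)
    ultimately show ?thesis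
      by (simp add: has_real_derivative_iff_has_vector_derivative)
  qed
  then have iQ: "(Q' has_integral (u 0)^2) {0..T}"
    using fundamental_theorem_of_calculus[of 0 T Q Q'] T bc0 bcT by (simp add: Q_def power2_eq_square)
  have "(Q' has_integral integral {0..T} (\<lambda>t. (1 - c*t) * (u' t)^2) - lam * integral {0..T} (\<lambda>t. (1 - c*t) * (u t)^2)) {0..T}"
    unfolding Q'_def[abs_def]
    by (intro has_integral_diff has_integral_mult_right integrable_integral integrable_continuous_interval
        continuous_intros cu cu')
  with iQ show ?thesis using has_integral_unique by smt
qed

lemma integral_weighted_square_pos:
  fixes c T :: real and u :: "real \<Rightarrow> real"
  assumes T: "0 < T" and cu: "continuous_on {0..T} u"
    and w: "\<And>t. t \<in> {0..T} \<Longrightarrow> 0 < 1 - c*t"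
    and r: "r \<in> {0..T}" "u r \<noteq> 0"
  shows "0 < integral {0..T} (\<lambda>t. (1 - c*t) * (u t)^2)"
proof -
  have cont: "continuous_on {0..T} (\<lambda>t. (1 - c*t) * (u t)^2)" by (intro continuous_intros cu)
  have nn: "\<And>t. t \<in> {0..T} \<Longrightarrow> 0 \<le> (1 - c*t) * (u t)^2" using w by (simp add: less_imp_le)
  have "0 \<le> integral {0..T} (\<lambda>t. (1 - c*t) * (u t)^2)"
    using integrable_continuous_interval[OF cont] nn by (rule integral_nonneg)
  moreover have "integral {0..T} (\<lambda>t. (1 - c*t) * (u t)^2) \<noteq> 0"
  proof
    assume "integral {0..T} (\<lambda>t. (1 - c*t) * (u t)^2) = 0"
    then have "((\<lambda>t. (1 - c*t) * (u t)^2) has_integral 0) (cbox 0 T)"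
      using integrable_integral[OF integrable_continuous_interval[OF cont]] by simp
    then have "(1 - c*r) * (u r)^2 = 0"
      by (rule has_integral_0_cbox_imp_0[rotated 2]) (use cont nn r T in auto)
    then show False using w[OF r(1)] r(2) by simp
  qed
  ultimately show ?thesis by linarith
qed

lemma riccati_potential_of_log_deriv:
  fixes c t lam u u' u'' :: real
  assumes u: "u \<noteq> 0" and ode: "c * u' - (1 - c*t) * u'' = lam * (1 - c*t) * u"
  shows "c * (u'/u) - (1 - c*t) * ((u'' * u - u' * u') / (u * u)) - (1 - c*t) * (u'/u)^2 = lam * (1 - c*t)"
proof -
  have h: "(u'' * u - u' * u') / (u * u) + (u'/u)^2 = u''/u"
    using u by (simp add: power2_eq_square field_simps)
  have "c * (u'/u) - (1 - c*t) * ((u'' * u - u' * u') / (u * u)) - (1 - c*t) * (u'/u)^2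
      = c * (u'/u) - (1 - c*t) * ((u'' * u - u' * u') / (u * u) + (u'/u)^2)"
    by (simp add: algebra_simps)
  also have "\<dots> = (c * u' - (1 - c*t) * u'') / u"
    unfolding h by (simp add: diff_divide_distrib)
  also have "\<dots> = lam * (1 - c*t)"
    unfolding ode using u by simp
  finally show ?thesis .
qed

lemma rayleigh_ge_of_nonvanishing_solution:
  fixes c T lam :: real and u u' u'' f f' :: "real \<Rightarrow> real"
  assumes T: "0 < T" and w: "\<And>t. t \<in> {0..T} \<Longrightarrow> 0 < 1 - c*t"
    and du: "\<And>t. t \<in> {0..T} \<Longrightarrow> (u has_real_derivative u' t) (at t within {0..T})"
    and du': "\<And>t. t \<in> {0..T} \<Longrightarrow> (u' has_real_derivative u'' t) (at t within {0..T})"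
    and cu'': "continuous_on {0..T} u''"
    and ode: "\<And>t. t \<in> {0..T} \<Longrightarrow> - u'' t + c / (1 - c*t) * u' t = lam * u t"
    and unz: "\<And>t. t \<in> {0..T} \<Longrightarrow> u t \<noteq> 0" and bc: "u' 0 = - u 0"
    and df: "\<And>t. t \<in> {0..T} \<Longrightarrow> (f has_real_derivative f' t) (at t within {0..T})"
    and cf': "continuous_on {0..T} f'" and fT: "f T = 0"
  shows "lam * integral {0..T} (\<lambda>t. (1 - c*t) * (f t)^2) \<le> integral {0..T} (\<lambda>t. (1 - c*t) * (f' t)^2) - (f 0)^2"
proof -
  have cu: "continuous_on {0..T} u" by (rule DERIV_continuous_on[OF du])
  have cu': "continuous_on {0..T} u'" by (rule DERIV_continuous_on[OF du'])
  have cf: "continuous_on {0..T} f" by (rule DERIV_continuous_on[OF df])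
  define g where "g t = u' t / u t" for t
  define g' where "g' t = (u'' t * u t - u' t * u' t) / (u t * u t)" for t
  have dg: "(g has_real_derivative g' t) (at t within {0..T})" if "t \<in> {0..T}" for t
    unfolding g_def[abs_def] g'_def by (rule DERIV_divide[OF du'[OF that] du[OF that] unz[OF that]])
  have cg: "continuous_on {0..T} g"
    unfolding g_def[abs_def] by (intro continuous_intros cu cu') (auto dest: unz)
  have cg': "continuous_on {0..T} g'"
    unfolding g'_def[abs_def] by (intro continuous_intros cu cu' cu'') (auto dest: unz)
  have g0: "g 0 + 1 = 0"
    using unz[of 0] T unfolding g_def bc by simp
  have "(c * g t - (1 - c*t) * g' t - (1 - c*t) * (g t)^2) * (f t)^2 = lam * ((1 - c*t) * (f t)^2)"
    if t: "t \<in> {0..T}" for t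
  proof -
    have "c * u' t - (1 - c*t) * u'' t = lam * (1 - c*t) * u t"
      using ode[OF t] w[OF t] by (simp add: field_simps)
    from riccati_potential_of_log_deriv[OF unz[OF t] this] show ?thesis
      unfolding g_def g'_def by simp
  qed
  then have "integral {0..T} (\<lambda>t. (c * g t - (1 - c*t) * g' t - (1 - c*t) * (g t)^2) * (f t)^2)
      = integral {0..T} (\<lambda>t. lam * ((1 - c*t) * (f t)^2))"
    by (rule integral_cong)
  also have "\<dots> = lam * integral {0..T} (\<lambda>t. (1 - c*t) * (f t)^2)"
    using integral_cmul[of "{0..T}" lam "\<lambda>t. (1 - c*t) * (f t)^2"] by simp
  finally have potential: "integral {0..T} (\<lambda>t. (c * g t - (1 - c*t) * g' t - (1 - c*t) * (g t)^2) * (f t)^2)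
      = lam * integral {0..T} (\<lambda>t. (1 - c*t) * (f t)^2)" .
  have square: "0 \<le> integral {0..T} (\<lambda>t. (1 - c*t) * (f' t - g t * f t)^2)"
    using w by (intro integral_nonneg integrable_continuous_interval continuous_intros cf cf' cg)
      (simp_all add: less_imp_le)
  show ?thesis
    using riccati_identity[OF T df dg cf' cg' fT, of c] g0 potential square by simp
qed

lemma continuous_on_pos_if_nonzero:
  fixes g :: "real \<Rightarrow> real"
  assumes "continuous_on {0..T} g" "0 < g 0" "\<And>t. t \<in> {0..T} \<Longrightarrow> g t \<noteq> 0" "t \<in> {0..T}"
  shows "0 < g t"
proof (rule ccontr)
  assume "\<not> 0 < g t"
  moreover have "continuous_on {0..t} g"
    by (rule continuous_on_subset[OF assms(1)]) (use assms(4) in auto)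
  ultimately obtain x where "0 \<le> x" "x \<le> t" "g x = 0"
    using IVT2'[of g t 0 0] assms(2,4) by auto
  then show False using assms(3)[of x] assms(4) by auto
qed

section \<open>Trial functions\<close>

text \<open>The potential \<open>c g - (1 - c t) g' - (1 - c t) g\<^sup>2\<close> of the Riccati identity for the
  trial logarithmic derivative \<open>g t = -1 + c\<^sup>2 t / 2\<close>.\<close>
definition trial_potential :: "real \<Rightarrow> real \<Rightarrow> real" where
  "trial_potential c t = c * (-1 + c^2*t/2) - (1 - c*t) * (c^2/2) - (1 - c*t) * (-1 + c^2*t/2)^2"

lemma trial_potential_expand:
  "trial_potential c t
     = (-1 - c - c^2/2) * (1 - c*t) + (c^3*t/2 - c^3*t^2 - c^4*t^2/4 + c^5*t^3/4)"
  unfolding trial_potential_def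
  by (simp add: power2_eq_square power3_eq_cube field_simps) (simp add: algebra_simps numeral_eq_Suc)

lemma trial_potential_ge:
  assumes c0: "0 \<le> c" and t: "0 \<le> t" "t \<le> \<delta>" and cd: "c * \<delta> \<le> 1/3"
  shows "(-1 - c - c^2/2 - 3/2 * (c^3*\<delta>^2 + c^4*\<delta>^2/4)) * (1 - c*t) \<le> trial_potential c t"
proof -
  define X where "X = c^3*\<delta>^2 + c^4*\<delta>^2/4"
  have "c * t \<le> 1/3" using cd mult_left_mono[OF t(2) c0] by linarith
  moreover have "0 \<le> X" unfolding X_def using c0 by simp
  ultimately have "X * (c*t*3) \<le> X * 1" by (intro mult_left_mono) auto
  then have "X \<le> 3/2 * X * (1 - c*t)" by (simp add: algebra_simps)
  moreover have "c^3*t^2 + c^4*t^2/4 \<le> X"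
    unfolding X_def using t c0 power_mono[of t \<delta> 2]
    by (intro add_mono divide_right_mono mult_left_mono) auto
  moreover have "0 \<le> c^3*t/2 + c^5*t^3/4" using c0 t by simp
  ultimately show ?thesis unfolding trial_potential_expand X_def by (simp add: algebra_simps)
qed

lemma trial_potential_le:
  assumes c0: "0 \<le> c" and t: "0 \<le> t" "t \<le> \<delta>" and cd: "c * \<delta> \<le> 1/3"
  shows "trial_potential c t \<le> (-1 - c - c^2/2) * (1 - c*t) + c^3 * \<delta>"
proof -
  have ct: "c * t \<le> 1/3" using cd mult_left_mono[OF t(2) c0] by linarith
  have "c^5*t^3 = (c^3*t) * (c*t)^2" by (simp add: power2_eq_square power3_eq_cube numeral_eq_Suc algebra_simps)
  also have "\<dots> \<le> (c^3*t) * 1" using c0 t ct by (intro mult_left_mono power_le_one) auto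
  finally have "c^5*t^3 \<le> c^3*t" by simp
  moreover have "0 \<le> c^3 * t" using c0 t by simp
  moreover have "c^3 * t \<le> c^3 * \<delta>" using t c0 by (simp add: mult_left_mono)
  moreover have "0 \<le> c^3*t^2" "0 \<le> c^4*t^2/4" using c0 by auto
  ultimately show ?thesis unfolding trial_potential_expand by linarith
qed

lemma integral_trial_potential_ge:
  assumes c0: "0 \<le> c" and cd: "c*\<delta> \<le> 1/3" and T: "T \<le> \<delta>" and cf: "continuous_on {0..T} f"
  shows "(-1 - c - c^2/2 - 3/2*(c^3*\<delta>^2 + c^4*\<delta>^2/4)) * integral {0..T} (\<lambda>t. (1 - c*t) * (f t)^2)
    \<le> integral {0..T} (\<lambda>t. trial_potential c t * (f t)^2)"
    (is "?\<mu> * _ \<le> _")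
proof -
  have "?\<mu> * integral {0..T} (\<lambda>t. (1 - c*t) * (f t)^2) = integral {0..T} (\<lambda>t. ?\<mu> * ((1 - c*t) * (f t)^2))"
    using integral_cmul[of "{0..T}" ?\<mu>] by simp
  also have "\<dots> \<le> integral {0..T} (\<lambda>t. trial_potential c t * (f t)^2)"
  proof (rule integral_le)
    fix t assume t: "t \<in> {0..T}"
    have "?\<mu> * (1 - c*t) * (f t)^2 \<le> trial_potential c t * (f t)^2"
      using trial_potential_ge[OF c0 _ _ cd, of t] t T by (intro mult_right_mono) auto
    then show "?\<mu> * ((1 - c*t) * (f t)^2) \<le> trial_potential c t * (f t)^2"
      by (simp add: mult.assoc)
  qed (auto simp: trial_potential_def intro!: integrable_continuous_interval continuous_intros cf)
  finally show ?thesis .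
qed

lemma integral_trial_potential_le:
  assumes c0: "0 \<le> c" and cd: "c*\<delta> \<le> 1/3" and d0: "0 \<le> \<delta>" and cf: "continuous_on {0..\<delta>} f"
    and f1: "\<And>t. t \<in> {0..\<delta>} \<Longrightarrow> \<bar>f t\<bar> \<le> 1"
  shows "integral {0..\<delta>} (\<lambda>t. trial_potential c t * (f t)^2)
    \<le> (-1 - c - c^2/2) * integral {0..\<delta>} (\<lambda>t. (1 - c*t) * (f t)^2) + c^3*\<delta>^2"
    (is "_ \<le> ?\<mu> * _ + _")
proof -
  have "integral {0..\<delta>} (\<lambda>t. trial_potential c t * (f t)^2)
      \<le> integral {0..\<delta>} (\<lambda>t. ?\<mu> * ((1 - c*t) * (f t)^2) + c^3*\<delta>)"
  proof (rule integral_le)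
    fix t assume t: "t \<in> {0..\<delta>}"
    have f2: "0 \<le> (f t)^2" "(f t)^2 \<le> 1"
      using power_le_one[OF abs_ge_zero f1[OF t], of 2] by simp_all
    have "trial_potential c t * (f t)^2 \<le> (?\<mu> * (1 - c*t) + c^3 * \<delta>) * (f t)^2"
      using trial_potential_le[OF c0 _ _ cd, of t] t f2 by (intro mult_right_mono) auto
    also have "\<dots> = ?\<mu> * ((1 - c*t) * (f t)^2) + c^3*\<delta> * (f t)^2"
      by (simp only: distrib_right mult.assoc)
    also have "\<dots> \<le> ?\<mu> * ((1 - c*t) * (f t)^2) + c^3*\<delta> * 1"
      using f2 c0 d0 by (intro add_left_mono mult_left_mono) auto
    finally show "trial_potential c t * (f t)^2 \<le> ?\<mu> * ((1 - c*t) * (f t)^2) + c^3*\<delta>" by simp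
  qed (auto simp: trial_potential_def intro!: integrable_continuous_interval continuous_intros cf)
  also have "\<dots> = ?\<mu> * integral {0..\<delta>} (\<lambda>t. (1 - c*t) * (f t)^2) + c^3*\<delta>^2"
  proof -
    have "(\<lambda>t. ?\<mu> * ((1 - c*t) * (f t)^2)) integrable_on {0..\<delta>}"
      by (intro integrable_continuous_interval continuous_intros cf)
    then have "integral {0..\<delta>} (\<lambda>t. ?\<mu> * ((1 - c*t) * (f t)^2) + c^3*\<delta>)
        = integral {0..\<delta>} (\<lambda>t. ?\<mu> * ((1 - c*t) * (f t)^2)) + integral {0..\<delta>} (\<lambda>t. c^3*\<delta>)"
      by (rule integral_add[OF _ integrable_const_ivl])
    then show ?thesis
      using integral_cmul[of "{0..\<delta>}" ?\<mu> "\<lambda>t. (1 - c*t) * (f t)^2"] d0 by (simp add: power2_eq_square)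
  qed
  finally show ?thesis .
qed

lemma eigenvalue_lower_bound:
  fixes c \<delta> T lam :: real and u u' u'' :: "real \<Rightarrow> real"
  assumes c0: "0 \<le> c" and cd: "c*\<delta> \<le> 1/3" and T: "0 < T" "T \<le> \<delta>"
    and du: "\<And>t. t \<in> {0..T} \<Longrightarrow> (u has_real_derivative u' t) (at t within {0..T})"
    and du': "\<And>t. t \<in> {0..T} \<Longrightarrow> (u' has_real_derivative u'' t) (at t within {0..T})"
    and ode: "\<And>t. t \<in> {0..T} \<Longrightarrow> - u'' t + c / (1 - c*t) * u' t = lam * u t"
    and bc0: "u' 0 = - u 0" and bcT: "u T = 0"
    and r: "r \<in> {0..T}" "u r \<noteq> 0"
  shows "-1 - c - c^2/2 - 3/2*(c^3*\<delta>^2 + c^4*\<delta>^2/4) \<le> lam"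
proof -
  define I where "I = integral {0..T} (\<lambda>t. (1 - c*t) * (u t)^2)"
  have w: "0 < 1 - c*t" if "t \<in> {0..T}" for t
    using that T c0 cd mult_left_mono[of t \<delta> c] by auto
  have cu: "continuous_on {0..T} u" by (rule DERIV_continuous_on[OF du])
  have cu': "continuous_on {0..T} u'" by (rule DERIV_continuous_on[OF du'])
  have dg: "((\<lambda>t. -1 + c^2*t/2) has_real_derivative c^2/2) (at t within {0..T})" for t
    by (auto intro!: derivative_eq_intros)
  have "0 \<le> integral {0..T} (\<lambda>t. (1 - c*t) * (u' t - (-1 + c^2*t/2) * u t)^2)"
    using w by (intro integral_nonneg integrable_continuous_interval continuous_intros cu cu')
      (simp_all add: less_imp_le)
  then have "(-1 - c - c^2/2 - 3/2*(c^3*\<delta>^2 + c^4*\<delta>^2/4)) * I \<le> lam * I"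
    using integral_trial_potential_ge[OF c0 cd T(2) cu]
      riccati_identity[OF T(1) du dg cu' continuous_on_const bcT, of c]
      eigenfunction_energy_identity[OF T(1) du du' ode w bc0 bcT]
    unfolding I_def trial_potential_def by simp
  moreover have "0 < I"
    unfolding I_def using integral_weighted_square_pos[OF T(1) cu w r] .
  ultimately show ?thesis by simp
qed

text \<open>The exponential of a primitive of the trial logarithmic derivative \<open>-1 + c\<^sup>2 t / 2\<close>.\<close>
definition trial :: "real \<Rightarrow> real \<Rightarrow> real" where
  "trial c t = exp (-t + c^2*t^2/4)"

lemma has_real_derivative_trial:
  "(trial c has_real_derivative (-1 + c^2*t/2) * trial c t) (at t within S)"
  unfolding trial_def[abs_def]
  by (auto intro!: derivative_eq_intros simp: power2_eq_square field_simps)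

lemma continuous_on_trial: "continuous_on S (trial c)"
  unfolding trial_def[abs_def] by (intro continuous_intros) auto

lemma trial_bounds:
  assumes c0: "0 \<le> c" and c1: "c \<le> 1" and cd: "c*\<delta> \<le> 1/3" and t: "t \<in> {0..\<delta>}"
  shows "trial c \<delta> \<le> trial c t" and "trial c t \<le> 1"
proof -
  have "c*(\<delta>+t) \<le> c*(2*\<delta>)" using t c0 by (intro mult_left_mono) auto
  then have "c*(c*(\<delta>+t)) \<le> 1*(2/3)" using c0 c1 cd t by (intro mult_mono) auto
  then have "(c*(c*(\<delta>+t)))*(\<delta> - t) \<le> (2/3)*(\<delta> - t)" using t by (intro mult_right_mono) auto
  moreover have "c^2*\<delta>^2/4 - c^2*t^2/4 = (c*(c*(\<delta>+t)))*(\<delta> - t)/4"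
    by (simp add: power2_eq_square algebra_simps)
  ultimately have "-\<delta> + c^2*\<delta>^2/4 \<le> -t + c^2*t^2/4" using t by simp
  then show "trial c \<delta> \<le> trial c t" unfolding trial_def by simp
  have "c*(c*t) \<le> 1*(1/3)" using c0 c1 cd t mult_left_mono[of t \<delta> c] by (intro mult_mono) auto
  then have "(c*(c*t))*t \<le> 2*t" using t by (intro mult_right_mono) auto
  then have "c^2*t^2/4 \<le> t" using t by (simp add: power2_eq_square algebra_simps)
  then show "trial c t \<le> 1" unfolding trial_def by simp
qed

lemma trial_log_deriv_sq_le:
  fixes c \<delta> t :: real
  assumes c0: "0 \<le> c" and c1: "c \<le> 1" and cd: "c*\<delta> \<le> 1/3" and t: "t \<in> {0..\<delta>}"
  shows "(-1 + c^2*t/2)^2 \<le> 1"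
proof -
  have "c*(c*t) \<le> 1*(1/3)" using t c0 c1 cd mult_left_mono[of t \<delta> c] by (intro mult_mono) auto
  moreover have "0 \<le> c*(c*t)" using t c0 by simp
  ultimately have "\<bar>-1 + c^2*t/2\<bar> \<le> 1" by (simp add: power2_eq_square abs_le_iff)
  then have "\<bar>-1 + c^2*t/2\<bar>^2 \<le> 1" by (intro power_le_one) auto
  then show ?thesis by simp
qed

lemma trial_energy_le:
  fixes c \<delta> :: real
  assumes c0: "0 \<le> c" and c1: "c \<le> 1" and cd: "c*\<delta> \<le> 1/3" and d0: "0 < \<delta>"
  shows "integral {0..\<delta>} (\<lambda>t. (1-c*t) * ((-1 + c^2*t/2) * trial c t)^2) - (trial c 0 - trial c \<delta>)^2
     \<le> (-1-c-c^2/2) * integral {0..\<delta>} (\<lambda>t. (1-c*t) * (trial c t - trial c \<delta>)^2)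
        + ((trial c \<delta>)^2 * \<delta> + c^3*\<delta>^2)"
proof -
  define f where "f t = trial c t - trial c \<delta>" for t
  define f' where "f' t = (-1 + c^2*t/2) * trial c t" for t
  have ct: "0 \<le> c*t" "c*t \<le> 1/3" if "t \<in> {0..\<delta>}" for t
    using that c0 cd mult_left_mono[of t \<delta> c] by auto
  have "0 < trial c \<delta>" unfolding trial_def by simp
  then have f1: "\<bar>f t\<bar> \<le> 1" if "t \<in> {0..\<delta>}" for t
    using trial_bounds[OF c0 c1 cd that] unfolding f_def by simp
  have df: "(f has_real_derivative f' t) (at t within {0..\<delta>})" for t
    unfolding f_def[abs_def] f'_def
    using has_real_derivative_trial DERIV_const by (rule DERIV_diff[THEN DERIV_cong]) simp
  have cf: "continuous_on {0..\<delta>} f"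
    unfolding f_def[abs_def] by (intro continuous_intros continuous_on_trial)
  have cf': "continuous_on {0..\<delta>} f'"
    unfolding f'_def[abs_def] by (intro continuous_intros continuous_on_trial) auto
  have dg: "((\<lambda>t. -1 + c^2*t/2) has_real_derivative c^2/2) (at t within {0..\<delta>})" for t
    by (auto intro!: derivative_eq_intros)
  have "integral {0..\<delta>} (\<lambda>t. (1 - c*t) * (f' t - (-1 + c^2*t/2) * f t)^2)
      \<le> integral {0..\<delta>} (\<lambda>t. (trial c \<delta>)^2)"
  proof (rule integral_le)
    fix t assume t: "t \<in> {0..\<delta>}"
    have "(-1 + c^2*t/2)^2 \<le> 1" by (rule trial_log_deriv_sq_le[OF c0 c1 cd t])
    then have "(1 - c*t) * (-1 + c^2*t/2)^2 * (trial c \<delta>)^2 \<le> 1 * 1 * (trial c \<delta>)^2"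
      using ct[OF t] by (intro mult_mono) auto
    moreover have "f' t - (-1 + c^2*t/2) * f t = (-1 + c^2*t/2) * trial c \<delta>"
      unfolding f_def f'_def by (simp add: field_simps)
    ultimately show "(1 - c*t) * (f' t - (-1 + c^2*t/2) * f t)^2 \<le> (trial c \<delta>)^2"
      by (simp add: power_mult_distrib mult.assoc)
  qed (auto intro!: integrable_continuous_interval continuous_intros cf cf')
  then have "integral {0..\<delta>} (\<lambda>t. (1 - c*t) * (f' t - (-1 + c^2*t/2) * f t)^2) \<le> (trial c \<delta>)^2 * \<delta>"
    using d0 by (simp add: mult.commute)
  with integral_trial_potential_le[OF c0 cd _ cf f1] d0
    riccati_identity[OF d0 df dg cf' continuous_on_const, of c]
  show ?thesis unfolding f_def f'_def trial_potential_def by simp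
qed

lemma trial_end_le:
  assumes c0: "0 \<le> c" and cd: "c*\<delta> \<le> 1/3" and d5: "5 \<le> \<delta>"
  shows "trial c \<delta> \<le> 1/9"
proof -
  have "c^2*\<delta>^2 \<le> 1" using cd c0 d5 by (simp add: power_mult_distrib[symmetric] power_le_one)
  then have "trial c \<delta> \<le> exp (-4)" unfolding trial_def using d5 by simp
  also have "exp (-4::real) \<le> 1/9"
  proof -
    have "(3::real) \<le> exp 2" using exp_ge_add_one_self[of 2] by simp
    then have "3*3 \<le> exp 2 * exp (2::real)" by (intro mult_mono) auto
    then show ?thesis by (simp add: exp_minus divide_simps flip: exp_add)
  qed
  finally show ?thesis .
qed

lemma trial_ge_on_unit_interval:
  assumes "t \<in> {0..1}"
  shows "1/3 \<le> trial c t"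
proof -
  have "0 \<le> c^2*t^2/4" "t \<le> 1" using assms by auto
  then have "-1 \<le> -t + c^2*t^2/4" by linarith
  then have "exp (-1) \<le> trial c t" unfolding trial_def by simp
  moreover have "1/3 \<le> exp (-1::real)" using exp_le by (simp add: exp_minus divide_simps)
  ultimately show ?thesis by linarith
qed

lemma trial_weighted_norm_ge:
  fixes c \<delta> :: real
  assumes c0: "0 \<le> c" and cd: "c*\<delta> \<le> 1/3" and d5: "5 \<le> \<delta>"
  shows "1/50 \<le> integral {0..\<delta>} (\<lambda>t. (1-c*t) * (trial c t - trial c \<delta>)^2)"
proof -
  define f where "f t = trial c t - trial c \<delta>" for t
  have cf: "continuous_on {0..\<delta>} (\<lambda>t. (1-c*t)*(f t)^2)"
    unfolding f_def by (intro continuous_intros continuous_on_trial)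
  have w: "2/3 \<le> 1 - c*t" if "t \<in> {0..\<delta>}" for t
    using that c0 cd mult_left_mono[of t \<delta> c] by auto
  have "integral {0..1} (\<lambda>t::real. 1/50) \<le> integral {0..1} (\<lambda>t. (1-c*t)*(f t)^2)"
  proof (rule integral_le)
    fix t :: real assume t: "t \<in> {0..1}"
    have "2/9 \<le> f t"
      unfolding f_def using trial_ge_on_unit_interval[OF t, of c] trial_end_le[OF c0 cd d5] by linarith
    then have "(2/3) * (2/9)^2 \<le> (1-c*t)*(f t)^2"
      using w[of t] t d5 by (intro mult_mono power_mono) auto
    then show "1/50 \<le> (1-c*t)*(f t)^2" by (simp add: power2_eq_square)
  qed (use continuous_on_subset[OF cf] d5 in \<open>auto intro!: integrable_continuous_interval\<close>)
  also have "\<dots> \<le> integral {0..\<delta>} (\<lambda>t. (1-c*t)*(f t)^2)"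
  proof (rule integral_subset_le)
    show "\<forall>t\<in>{0..\<delta>}. 0 \<le> (1-c*t)*(f t)^2"
    proof
      fix t assume "t \<in> {0..\<delta>}"
      then have "0 \<le> 1 - c*t" using w[of t] by linarith
      then show "0 \<le> (1-c*t)*(f t)^2" by simp
    qed
  qed (use continuous_on_subset[OF cf] d5 in \<open>auto intro!: integrable_continuous_interval\<close>)
  finally show ?thesis unfolding f_def by simp
qed

section \<open>Shooting for the lowest eigenvalue\<close>

definition robin_eigenvalue :: "real \<Rightarrow> real \<Rightarrow> real \<Rightarrow> bool" where
  "robin_eigenvalue c \<delta> lam \<longleftrightarrow> (\<exists>u u' u'' :: real \<Rightarrow> real.
        (\<forall>t\<in>{0..\<delta>}. (u has_real_derivative u' t) (at t within {0..\<delta>}) \<and>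
                         (u' has_real_derivative u'' t) (at t within {0..\<delta>})) \<and>
        (\<forall>t\<in>{0..\<delta>}. - u'' t + c / (1 - c * t) * u' t = lam * u t) \<and>
        u' 0 = - u 0 \<and> u \<delta> = 0 \<and>
        (\<exists>t\<in>{0..\<delta>}. u t \<noteq> 0))"

lemma robin_eigenvalue_ge:
  assumes "0 \<le> c" "c*\<delta> \<le> 1/3" "0 < \<delta>" "robin_eigenvalue c \<delta> lam"
  shows "-1 - c - c^2/2 - 3/2*(c^3*\<delta>^2 + c^4*\<delta>^2/4) \<le> lam"
proof -
  obtain u u' u'' r where
    D: "\<forall>t\<in>{0..\<delta>}. (u has_real_derivative u' t) (at t within {0..\<delta>}) \<and>
                     (u' has_real_derivative u'' t) (at t within {0..\<delta>})"
    and "\<forall>t\<in>{0..\<delta>}. - u'' t + c / (1 - c * t) * u' t = lam * u t"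
    and "u' 0 = - u 0" "u \<delta> = 0" "r \<in> {0..\<delta>}" "u r \<noteq> 0"
    using assms(4) unfolding robin_eigenvalue_def by blast
  then show ?thesis
    using eigenvalue_lower_bound[OF assms(1,2,3) order_refl, of u u' u'' lam r] D by blast
qed

lemma isCont_sol_param:
  assumes "0 \<le> c" "c * \<bar>t\<bar> < 1"
  shows "isCont (\<lambda>l. sol c l a b t) l"
proof -
  define L where "L = \<bar>l\<bar> + 1"
  have "continuous_on ({-L..L} \<times> {-\<bar>t\<bar>..\<bar>t\<bar>}) (\<lambda>p. sol c (fst p) a b (snd p))"
    using continuous_on_sol_joint[OF assms(1) abs_ge_zero assms(2)] .
  then have "continuous_on {-L..L} (\<lambda>l. (\<lambda>p. sol c (fst p) a b (snd p)) (l, t))"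
    by (rule continuous_on_compose2) (auto intro!: continuous_intros)
  then have "continuous_on {-L..L} (\<lambda>l. sol c l a b t)" by simp
  then show ?thesis
    by (rule continuous_on_interior) (auto simp: L_def)
qed

text \<open>The Wronskian \<open>(1 - c t) (u v' - u' v)\<close> of \<open>u = sol c l 1 (-1)\<close> and \<open>v = sol c l 0 1\<close>
  is constant, equal to \<open>1\<close>.\<close>
lemma sol_no_double_zero:
  assumes c0: "0 \<le> c" and t: "0 \<le> t" "c * t < 1"
    and z: "sol c l 1 (-1) t = 0" "sol_deriv c l 1 (-1) t = 0"
  shows False
proof -
  define u where "u = sol c l 1 (-1)"
  define v where "v = sol c l 0 1"
  define W where "W x = (1 - c*x) * (u x * sol_deriv c l 0 1 x - sol_deriv c l 1 (-1) x * v x)" for x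
  have ct: "c * \<bar>x\<bar> < 1" if "x \<in> {0..t}" for x
    using that t c0 mult_left_mono[of x t c] by auto
  have dW: "(W has_real_derivative 0) (at x)" if "x \<in> {0..t}" for x
  proof -
    note U = sol_derivs_and_sums(1,2)[OF c0 ct[OF that], of l 1 "-1", folded u_def]
    note V = sol_derivs_and_sums(1,2)[OF c0 ct[OF that], of l 0 1, folded v_def]
    have "(W has_real_derivative
        u x * ((1 - c*x) * sol_deriv2 c l 0 1 x - c * sol_deriv c l 0 1 x + l * (1 - c*x) * v x)
        - v x * ((1 - c*x) * sol_deriv2 c l 1 (-1) x - c * sol_deriv c l 1 (-1) x + l * (1 - c*x) * u x)) (at x)"
      unfolding W_def[abs_def]
      by (rule derivative_eq_intros U V refl)+ (simp add: algebra_simps)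
    then show ?thesis
      using sol_ode[OF c0 ct[OF that], of l 0 1] sol_ode[OF c0 ct[OF that], of l 1 "-1"]
      unfolding u_def v_def by simp
  qed
  have "W t = W 0"
  proof (cases "t = 0")
    case False
    have cW: "continuous_on {0..t} W"
      using dW by (blast intro: continuous_at_imp_continuous_on DERIV_isCont)
    show ?thesis
      by (rule DERIV_isconst2[of 0 t, OF _ cW]) (use False t dW in auto)
  qed simp
  then show False using z unfolding W_def u_def v_def by (simp add: sol_at_0)
qed

lemma sol_nonvanishing_below:
  assumes c0: "0 \<le> c" and cd: "c*\<delta> \<le> 1/3" and t: "t \<in> {0..\<delta>}"
    and l: "l < -1 - c - c^2/2 - 3/2*(c^3*\<delta>^2 + c^4*\<delta>^2/4)"
  shows "sol c l 1 (-1) t \<noteq> 0"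
proof
  assume z: "sol c l 1 (-1) t = 0"
  then have tpos: "0 < t" using t by (cases "t = 0") (auto simp: sol_at_0)
  have "c * t < 1" using t c0 cd mult_left_mono[of t \<delta> c] by auto
  note S = sol_on_interval[OF c0 this, where l=l and a=1 and b="-1"]
  have "-1 - c - c^2/2 - 3/2*(c^3*\<delta>^2 + c^4*\<delta>^2/4) \<le> l"
    by (rule eigenvalue_lower_bound[OF c0 cd tpos _ S(1) S(2) S(3), where r=0])
      (use t tpos z in \<open>auto simp: sol_at_0\<close>)
  with l show False by simp
qed

text \<open>Were the solution without zeros on \<open>[0, \<delta>]\<close>, the Rayleigh quotient of the trial function
  would dominate the parameter.\<close>
lemma sol_vanishes_above_trial_energy:
  fixes c \<delta> :: real
  defines "A \<equiv> (trial c \<delta>)^2*\<delta> + c^3*\<delta>^2"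
  assumes c0: "0 < c" and c1: "c \<le> 1" and cd: "c*\<delta> \<le> 1/3" and d5: "5 \<le> \<delta>"
  shows "\<exists>t\<in>{0..\<delta>}. sol c (-1 - c - c^2/2 + 100*A + c^4) 1 (-1) t = 0"
proof (rule ccontr)
  define \<mu> where "\<mu> = -1 - c - c^2/2 + 100*A + c^4"
  define I where "I = integral {0..\<delta>} (\<lambda>t. (1 - c*t) * (trial c t - trial c \<delta>)^2)"
  assume "\<not> (\<exists>t\<in>{0..\<delta>}. sol c (-1 - c - c^2/2 + 100*A + c^4) 1 (-1) t = 0)"
  then have nz: "\<And>t. t \<in> {0..\<delta>} \<Longrightarrow> sol c \<mu> 1 (-1) t \<noteq> 0" unfolding \<mu>_def by blast
  have d0: "0 < \<delta>" using d5 by simp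
  have cd1: "c * \<delta> < 1" using cd by simp
  note S = sol_on_interval[OF less_imp_le[OF c0] cd1, where l=\<mu> and a=1 and b="-1"]
  have w: "0 < 1 - c*t" if "t \<in> {0..\<delta>}" for t
  proof -
    have "c * t \<le> c * \<delta>" using that c0 by (intro mult_left_mono) auto
    then show ?thesis using cd by simp
  qed
  have df: "((\<lambda>t. trial c t - trial c \<delta>) has_real_derivative (-1 + c^2*t/2) * trial c t) (at t within {0..\<delta>})" for t
    using DERIV_diff[OF has_real_derivative_trial DERIV_const] by simp
  have "\<mu> * I \<le> integral {0..\<delta>} (\<lambda>t. (1 - c*t) * ((-1 + c^2*t/2) * trial c t)^2) - (trial c 0 - trial c \<delta>)^2"
    unfolding I_def
    by (rule rayleigh_ge_of_nonvanishing_solution[OF d0 w S(1) S(2) S(6) S(3) nz _ df])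
      (auto simp: sol_at_0 intro!: continuous_intros continuous_on_trial)
  also have "\<dots> \<le> (-1 - c - c^2/2) * I + A"
    using trial_energy_le[OF less_imp_le[OF c0] c1 cd d0] unfolding I_def A_def .
  finally have "(100*A + c^4) * I \<le> A" unfolding \<mu>_def by (simp add: algebra_simps)
  moreover have "(100*A + c^4) * (1/50) \<le> (100*A + c^4) * I"
    using trial_weighted_norm_ge[OF less_imp_le[OF c0] cd d5] c0 d0
    unfolding I_def A_def by (intro mult_left_mono) auto
  moreover have "0 \<le> A" "0 < c^4" unfolding A_def using c0 d0 by auto
  ultimately show False by (simp add: algebra_simps)
qed

lemma first_vanishing_param:
  assumes c0: "0 \<le> c" and cd: "c * \<delta> < 1" and l01: "l0 \<le> l1"
    and zero: "ta \<in> {0..\<delta>}" "sol c l1 1 (-1) ta = 0"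
  obtains ls ts where "ls \<in> {l0..l1}" "ts \<in> {0..\<delta>}" "sol c ls 1 (-1) ts = 0"
    and "\<And>l t. l \<in> {l0..<ls} \<Longrightarrow> t \<in> {0..\<delta>} \<Longrightarrow> sol c l 1 (-1) t \<noteq> 0"
proof -
  define S where "S = {l0..l1} \<times> {0..\<delta>}"
  define Z where "Z = {p \<in> S. sol c (fst p) 1 (-1) (snd p) = 0}"
  define L where "L = \<bar>l0\<bar> + \<bar>l1\<bar>"
  have d0: "0 \<le> \<delta>" using zero(1) by simp
  have "continuous_on ({-L..L} \<times> {-\<delta>..\<delta>}) (\<lambda>p. sol c (fst p) 1 (-1) (snd p))"
    by (rule continuous_on_sol_joint[OF c0 d0 cd])
  moreover have "S \<subseteq> {-L..L} \<times> {-\<delta>..\<delta>}" unfolding S_def L_def by auto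
  ultimately have "continuous_on S (\<lambda>p. sol c (fst p) 1 (-1) (snd p))"
    by (rule continuous_on_subset)
  moreover have "compact S" unfolding S_def by (intro compact_Times compact_Icc)
  ultimately have "closed Z"
    unfolding Z_def by (intro continuous_closed_preimage_constant compact_imp_closed)
  with \<open>compact S\<close> have "compact Z"
    using compact_Int_closed[of S Z] by (simp add: Z_def Int_absorb1)
  then have "compact (fst ` Z)" by (intro compact_continuous_image continuous_intros)
  moreover have "(l1, ta) \<in> Z" unfolding Z_def S_def using zero l01 by auto
  ultimately obtain ls where ls: "ls \<in> fst ` Z" "\<And>l. l \<in> fst ` Z \<Longrightarrow> ls \<le> l"
    using compact_attains_inf[of "fst ` Z"] by blast
  then obtain ts where lts: "(ls, ts) \<in> Z" by force
  have "sol c l 1 (-1) t \<noteq> 0" if "l \<in> {l0..<ls}" "t \<in> {0..\<delta>}" for l t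
  proof
    assume "sol c l 1 (-1) t = 0"
    then have "(l, t) \<in> Z" using that lts unfolding Z_def S_def by auto
    then show False using ls(2)[of l] that(1) by force
  qed
  then show thesis using lts by (intro that[of ls ts]) (auto simp: Z_def S_def)
qed

lemma sol_nonneg_of_pos_on_left:
  assumes c0: "0 \<le> c" and ct: "c * \<bar>t\<bar> < 1" and l0: "l0 < l"
    and pos: "\<And>l'. l' \<in> {l0<..<l} \<Longrightarrow> 0 < sol c l' a b t"
  shows "0 \<le> sol c l a b t"
proof (rule tendsto_lowerbound)
  show "((\<lambda>l'. sol c l' a b t) \<longlongrightarrow> sol c l a b t) (at_left l)"
    using isCont_sol_param[OF c0 ct] by (simp add: isCont_def filterlim_at_split)
  show "\<forall>\<^sub>F l' in at_left l. 0 \<le> sol c l' a b t"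
    using eventually_at_left_real[OF l0] by (rule eventually_mono) (use pos in force)
qed simp

lemma nonneg_sol_vanishes_only_at_end:
  assumes c0: "0 \<le> c" and cd: "c * \<delta> < 1"
    and nonneg: "\<And>t. t \<in> {0..\<delta>} \<Longrightarrow> 0 \<le> sol c l 1 (-1) t"
    and ts: "ts \<in> {0..\<delta>}" and z: "sol c l 1 (-1) ts = 0"
  shows "ts = \<delta>"
proof (rule ccontr)
  assume "ts \<noteq> \<delta>"
  with ts have "ts < \<delta>" by simp
  have "ts \<noteq> 0" using z by (auto simp: sol_at_0)
  with ts have "0 < ts" by simp
  have ct: "c * \<bar>ts\<bar> < 1"
    using ts c0 cd mult_left_mono[of ts \<delta> c] by auto
  have "sol_deriv c l 1 (-1) ts = 0"
  proof (rule DERIV_local_min[OF sol_derivs_and_sums(1)[OF c0 ct]])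
    show "0 < min ts (\<delta> - ts)" using \<open>0 < ts\<close> \<open>ts < \<delta>\<close> by simp
    show "\<forall>y. \<bar>ts - y\<bar> < min ts (\<delta> - ts) \<longrightarrow> sol c l 1 (-1) ts \<le> sol c l 1 (-1) y"
    proof (intro allI impI)
      fix y assume "\<bar>ts - y\<bar> < min ts (\<delta> - ts)"
      then have "y \<in> {0..\<delta>}" by auto
      then show "sol c l 1 (-1) ts \<le> sol c l 1 (-1) y" using nonneg z by simp
    qed
  qed
  then show False using sol_no_double_zero[OF c0 _ _ z] ts ct by simp
qed

lemma robin_eigenvalue_of_sol_zero:
  assumes c0: "0 \<le> c" and cd: "c * \<delta> < 1" and d0: "0 < \<delta>" and z: "sol c l 1 (-1) \<delta> = 0"
  shows "robin_eigenvalue c \<delta> l"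
  unfolding robin_eigenvalue_def
proof (intro exI conjI)
  note S = sol_on_interval[OF c0 cd, where l=l and a=1 and b="-1"]
  show "\<forall>t\<in>{0..\<delta>}. (sol c l 1 (-1) has_real_derivative sol_deriv c l 1 (-1) t) (at t within {0..\<delta>})
      \<and> (sol_deriv c l 1 (-1) has_real_derivative sol_deriv2 c l 1 (-1) t) (at t within {0..\<delta>})"
    using S(1,2) by blast
  show "\<forall>t\<in>{0..\<delta>}. - sol_deriv2 c l 1 (-1) t + c / (1 - c * t) * sol_deriv c l 1 (-1) t
      = l * sol c l 1 (-1) t"
    using S(3) by blast
  show "\<exists>t\<in>{0..\<delta>}. sol c l 1 (-1) t \<noteq> 0" using d0 by (intro bexI[of _ 0]) (auto simp: sol_at_0)
qed (use z in \<open>auto simp: sol_at_0\<close>)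

lemma robin_eigenvalue_between:
  assumes c0: "0 \<le> c" and cd: "c * \<delta> < 1" and l01: "l0 \<le> l1"
    and no_zero: "\<And>t. t \<in> {0..\<delta>} \<Longrightarrow> sol c l0 1 (-1) t \<noteq> 0"
    and zero: "ta \<in> {0..\<delta>}" "sol c l1 1 (-1) ta = 0"
  shows "\<exists>l\<in>{l0<..l1}. robin_eigenvalue c \<delta> l"
proof -
  obtain ls ts where ls: "ls \<in> {l0..l1}" and ts: "ts \<in> {0..\<delta>}" and z: "sol c ls 1 (-1) ts = 0"
    and below: "\<And>l t. l \<in> {l0..<ls} \<Longrightarrow> t \<in> {0..\<delta>} \<Longrightarrow> sol c l 1 (-1) t \<noteq> 0"
    using first_vanishing_param[OF c0 cd l01 zero] by blast
  have "ls \<noteq> l0" using no_zero[OF ts] z by auto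
  with ls have l0ls: "l0 < ls" by simp
  have "0 \<le> sol c ls 1 (-1) t" if t: "t \<in> {0..\<delta>}" for t
  proof (rule sol_nonneg_of_pos_on_left[OF c0 _ l0ls])
    show "c * \<bar>t\<bar> < 1" using t c0 cd mult_left_mono[of t \<delta> c] by auto
    fix l assume l: "l \<in> {l0<..<ls}"
    show "0 < sol c l 1 (-1) t"
    proof (rule continuous_on_pos_if_nonzero[OF sol_on_interval(4)[OF c0 cd] _ _ t])
      show "0 < sol c l 1 (-1) 0" by (simp add: sol_at_0)
      show "\<And>s. s \<in> {0..\<delta>} \<Longrightarrow> sol c l 1 (-1) s \<noteq> 0" using below l by simp
    qed
  qed
  then have "ts = \<delta>" using nonneg_sol_vanishes_only_at_end[OF c0 cd _ ts z] by blast
  moreover have "0 < \<delta>" using z ts \<open>ts = \<delta>\<close> by (cases "\<delta> = 0") (auto simp: sol_at_0)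
  ultimately have "robin_eigenvalue c \<delta> ls" using robin_eigenvalue_of_sol_zero[OF c0 cd _] z by simp
  with l0ls ls show ?thesis by auto
qed

lemma robin_eigenvalue_exists_le:
  assumes c0: "0 < c" and c1: "c \<le> 1" and cd: "c*\<delta> \<le> 1/3" and d5: "5 \<le> \<delta>"
  shows "\<exists>lam. robin_eigenvalue c \<delta> lam
    \<and> lam \<le> -1 - c - c^2/2 + 100*((trial c \<delta>)^2*\<delta> + c^3*\<delta>^2) + c^4"
proof -
  define l0 where "l0 = -1 - c - c^2/2 - 3/2*(c^3*\<delta>^2 + c^4*\<delta>^2/4) - 1"
  define l1 where "l1 = -1 - c - c^2/2 + 100*((trial c \<delta>)^2*\<delta> + c^3*\<delta>^2) + c^4"
  have "0 \<le> 3/2*(c^3*\<delta>^2 + c^4*\<delta>^2/4)" "0 \<le> 100*((trial c \<delta>)^2*\<delta> + c^3*\<delta>^2) + c^4"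
    using c0 d5 by simp_all
  then have l01: "l0 \<le> l1" unfolding l0_def l1_def by linarith
  obtain ta where ta: "ta \<in> {0..\<delta>}" "sol c l1 1 (-1) ta = 0"
    using sol_vanishes_above_trial_energy[OF c0 c1 cd d5] unfolding l1_def by blast
  have no_zero: "sol c l0 1 (-1) t \<noteq> 0" if "t \<in> {0..\<delta>}" for t
    using sol_nonvanishing_below[OF less_imp_le[OF c0] cd that] unfolding l0_def by simp
  have "c * \<delta> < 1" using cd by simp
  from robin_eigenvalue_between[OF less_imp_le[OF c0] this l01 no_zero ta]
  obtain lam where "lam \<in> {l0<..l1}" "robin_eigenvalue c \<delta> lam" by blast
  then show ?thesis unfolding l1_def by auto
qed

section \<open>The lowest eigenvalue\<close>

lemma is_eigenvalue_H_iff: "is_eigenvalue_H h \<rho> lam \<longleftrightarrow> robin_eigenvalue (sqrt h) (delta_h h \<rho>) lam"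
  unfolding is_eigenvalue_H_def robin_eigenvalue_def Let_def ..

lemma lambda1_H_bounds:
  fixes h \<rho> :: real
  defines "c \<equiv> sqrt h" and "\<delta> \<equiv> h powr (\<rho> - 1/2)"
  assumes h0: "0 < h" and h1: "h < 1" and hr: "h powr \<rho> \<le> 1/3" and d5: "5 \<le> \<delta>"
  shows "-1 - c - c^2/2 - 3/2*(c^3*\<delta>^2 + c^4*\<delta>^2/4) \<le> lambda1_H h \<rho>"
    and "lambda1_H h \<rho> \<le> -1 - c - c^2/2 + 100*((trial c \<delta>)^2*\<delta> + c^3*\<delta>^2) + c^4"
proof -
  define S where "S = {lam. robin_eigenvalue c \<delta> lam}"
  have S: "lambda1_H h \<rho> = Inf S"
    unfolding lambda1_H_def S_def is_eigenvalue_H_iff c_def \<delta>_def delta_h_def ..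
  have c0: "0 < c" and c1: "c \<le> 1" unfolding c_def using h0 h1 by auto
  have "c * \<delta> = h powr \<rho>"
    unfolding c_def \<delta>_def using h0 by (simp add: powr_half_sqrt[symmetric] powr_add[symmetric])
  then have cd: "c * \<delta> \<le> 1/3" using hr by simp
  have low: "-1 - c - c^2/2 - 3/2*(c^3*\<delta>^2 + c^4*\<delta>^2/4) \<le> lam" if "lam \<in> S" for lam
    using robin_eigenvalue_ge[OF less_imp_le[OF c0] cd _] that d5 unfolding S_def by simp
  obtain lam where lam: "lam \<in> S"
    "lam \<le> -1 - c - c^2/2 + 100*((trial c \<delta>)^2*\<delta> + c^3*\<delta>^2) + c^4"
    using robin_eigenvalue_exists_le[OF c0 c1 cd d5] unfolding S_def by blast
  show "-1 - c - c^2/2 - 3/2*(c^3*\<delta>^2 + c^4*\<delta>^2/4) \<le> lambda1_H h \<rho>"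
    unfolding S using lam(1) low by (intro cInf_greatest) auto
  have "lambda1_H h \<rho> \<le> lam"
    unfolding S using lam(1) low by (intro cInf_lower bdd_belowI) auto
  with lam(2) show "lambda1_H h \<rho> \<le> -1 - c - c^2/2 + 100*((trial c \<delta>)^2*\<delta> + c^3*\<delta>^2) + c^4"
    by simp
qed

lemma lambda1_H_error_bound:
  assumes "0 < h" "h < 1" "h powr \<rho> \<le> 1/3" "5 \<le> h powr (\<rho> - 1/2)"
  shows "\<bar>lambda1_H h \<rho> - (-1 - sqrt h - h / 2)\<bar>
    \<le> 3/2*(sqrt h^3*(h powr (\<rho> - 1/2))^2 + sqrt h^4*(h powr (\<rho> - 1/2))^2/4)
      + 100*((trial (sqrt h) (h powr (\<rho> - 1/2)))^2 * h powr (\<rho> - 1/2) + sqrt h^3*(h powr (\<rho> - 1/2))^2)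
      + sqrt h^4"
proof -
  have "sqrt h^2 = h" using assms by simp
  moreover note lambda1_H_bounds[OF assms]
  moreover have "0 \<le> 3/2*(sqrt h^3*(h powr (\<rho> - 1/2))^2 + sqrt h^4*(h powr (\<rho> - 1/2))^2/4)"
    "0 \<le> 100*((trial (sqrt h) (h powr (\<rho> - 1/2)))^2 * h powr (\<rho> - 1/2) + sqrt h^3*(h powr (\<rho> - 1/2))^2)
      + sqrt h^4"
    using assms by simp_all
  ultimately show ?thesis unfolding abs_le_iff by linarith
qed

theorem lemma2p5:
  fixes \<rho> :: real
  assumes "1/4 < \<rho>" and "\<rho> < 1/2"
  shows "(\<lambda>h. lambda1_H h \<rho> - (-1 - sqrt h - h / 2)) \<in> o[at_right 0](\<lambda>h. h)"
proof -
  define E where "E h = 3/2*(sqrt h^3*(h powr (\<rho> - 1/2))^2 + sqrt h^4*(h powr (\<rho> - 1/2))^2/4)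
    + 100*((trial (sqrt h) (h powr (\<rho> - 1/2)))^2 * h powr (\<rho> - 1/2) + sqrt h^3*(h powr (\<rho> - 1/2))^2)
    + sqrt h^4" for h
  have "\<forall>\<^sub>F h in at_right 0. 0 < (h::real)" by real_asymp
  moreover have "\<forall>\<^sub>F h in at_right 0. (h::real) < 1" by real_asymp
  moreover have "\<forall>\<^sub>F h in at_right 0. h powr \<rho> \<le> 1/3" using assms by real_asymp
  moreover have "\<forall>\<^sub>F h in at_right 0. 5 \<le> h powr (\<rho> - 1/2)" using assms by real_asymp
  ultimately have "\<forall>\<^sub>F h in at_right 0. norm (lambda1_H h \<rho> - (-1 - sqrt h - h / 2)) \<le> 1 * norm (E h)"
    by eventually_elim (auto simp: E_def dest!: lambda1_H_error_bound)
  then have "(\<lambda>h. lambda1_H h \<rho> - (-1 - sqrt h - h / 2)) \<in> O[at_right 0](E)"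
    by (rule bigoI)
  moreover have "E \<in> o[at_right 0](\<lambda>h. h)"
    unfolding E_def trial_def using assms by real_asymp
  ultimately show ?thesis
    by (rule landau_o.big_small_trans)
qed

end
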